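(* Let $\mathcal{C}_{\mathbf{P}\boldsymbol{G}_N}(\mathcal{A})$ be an upper polynomial polar code and let $f$ be the monomial with $\operatorname{ev}(f)=\boldsymbol{G}_N[i]$ for some $i\in[0,2^m-1]$. Then for all $j>i$, $\operatorname{ev}(\check{f})\cdot (\mathbf{P}\boldsymbol{G}_N)[j]=0$.
   Context: Let $m\ge1$, $N=2^m$, $\mathbf{R}_m=\mathbb{F}_2[x_0,\dots,x_{m-1}]/(x_0^2-x_0,\dots,x_{m-1}^2-x_{m-1})$, and $\operatorname{ev}(Q)$ the evaluation vector of $Q\in\mathbf{R}_m$ at all points of $\mathbb{F}_2^m$. Let $\boldsymbol{G}_N=\begin{pmatrix}1&0\\1&1\end{pmatrix}^{\otimes m}$; row $i$ of $\boldsymbol{G}_N$, denoted $\boldsymbol{G}_N[i]$, is $\operatorname{ev}$ of the monomial $x_0^{b_0}\cdots x_{m-1}^{b_{m-1}}$ with $(b_0,\dots,b_{m-1})$ the binary expansion of $2^m-1-i$. An upper polynomial polar code $\mathcal{C}_{\mathbf{P}\boldsymbol{G}_N}(\mathcal{A})$ is the code spanned by the rows of $\mathbf{P}\boldsymbol{G}_N$ indexed by $\mathcal{A}\subseteq[0,N-1]$, where $\mathbf{P}\in\mathbb{F}_2^{N\times N}$ is upper triangular with ones on the diagonal. For a monomial $f$, $\check{f}=x_0\cdots x_{m-1}/f$ is its multiplicative complement. The dot denotes the scalar product over $\mathbb{F}_2$. *)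

theory Defs
  imports Main "HOL-Library.Z2"
begin

text \<open>F_2 is the type bit (a field). Vectors of length N = 2^m are functions
  nat => bit on indices < 2^m; N x N matrices are functions nat => nat => bit.\<close>

definition G2 :: "nat \<Rightarrow> nat \<Rightarrow> bit" where
  "G2 r c = (if r = 0 \<and> c = 1 then 0 else 1)"

text \<open>m-fold Kronecker power G_N (A tensor B with A the outer factor).\<close>
fun Gmat :: "nat \<Rightarrow> nat \<Rightarrow> nat \<Rightarrow> bit" where
  "Gmat 0 i k = 1"
| "Gmat (Suc m) i k = G2 (i div 2^m) (k div 2^m) * Gmat m (i mod 2^m) (k mod 2^m)"

definition digit :: "nat \<Rightarrow> nat \<Rightarrow> bool" where
  "digit n t = odd (n div 2^t)"

text \<open>A monomial of R_m is x_t for t in S, with S a subset of {0..<m}.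
  Evaluation vector: the k-th point of F_2^m is the one with x_t = digit t of (2^m-1-k);
  with this ordering, row i of Gmat m is ev of the monomial with exponents
  the binary digits of 2^m-1-i, as in the paper.\<close>
definition ev_mono :: "nat \<Rightarrow> nat set \<Rightarrow> nat \<Rightarrow> bit" where
  "ev_mono m S k = of_bool (\<forall>t\<in>S. digit (2^m - 1 - k) t)"

text \<open>Multiplicative complement x_0...x_{m-1} / f.\<close>
definition mono_compl :: "nat \<Rightarrow> nat set \<Rightarrow> nat set" where
  "mono_compl m S = {..<m} - S"

definition dot :: "nat \<Rightarrow> (nat \<Rightarrow> bit) \<Rightarrow> (nat \<Rightarrow> bit) \<Rightarrow> bit" where
  "dot N a b = (\<Sum>k<N. a k * b k)"

definition PG_row :: "nat \<Rightarrow> (nat \<Rightarrow> nat \<Rightarrow> bit) \<Rightarrow> nat \<Rightarrow> nat \<Rightarrow> bit" where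
  "PG_row m P j k = (\<Sum>l<2^m. P j l * Gmat m l k)"

definition upper_unitriangular :: "nat \<Rightarrow> (nat \<Rightarrow> nat \<Rightarrow> bit) \<Rightarrow> bool" where
  "upper_unitriangular N P \<longleftrightarrow>
     (\<forall>r<N. \<forall>c<N. c < r \<longrightarrow> P r c = 0) \<and> (\<forall>r<N. P r r = 1)"

end

theory Submission
  imports Defs
begin

(* Row a of G_N is the indicator of the binary submasks of a, so the monomial f with
   ev f = G_N[i] is the product of the x_t with bit t of i unset, and its complement is
   row 2^m - 1 - i, the bitwise complement of i.  By the Kronecker structure, rows a and b
   of G_N have inner product 1 exactly when a and b have no common bit.  Row j of P G_N
   combines rows l >= j > i of G_N; such an l is not a submask of i, hence shares a bit
   with 2^m - 1 - i, and every term vanishes. *)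

lemma digit_eq_bit: "digit n t = bit n t"
  by (simp add: digit_def bit_iff_odd)

lemma bit_exp_minus_1_minus_iff:
  fixes k :: nat
  assumes "k < 2^m" and "t < m"
  shows "bit (2^m - 1 - k) t \<longleftrightarrow> \<not> bit k t"
proof -
  have "int (2^m - 1 - k) = mask m - take_bit m (int k)"
    using assms(1) by (simp add: mask_eq_exp_minus_1 take_bit_int_eq_self)
  also have "\<dots> = take_bit m (not (int k))"
    by (simp add: take_bit_not_eq_mask_diff)
  finally have "bit (int (2^m - 1 - k)) t = bit (take_bit m (not (int k))) t"
    by simp
  then show ?thesis
    using assms(2) by (simp add: bit_of_nat_iff_bit bit_take_bit_iff bit_not_iff)
qed

lemma bits_subset_imp_le:
  fixes a b :: nat
  assumes "\<And>t. bit a t \<Longrightarrow> bit b t"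
  shows "a \<le> b"
proof -
  have "int a = and (int a) (int b)"
    using assms by (auto simp: bit_eq_iff bit_and_iff bit_of_nat_iff_bit)
  also have "\<dots> \<le> int b"
    by simp
  finally show ?thesis
    by simp
qed

lemma bit_less_exp_imp_less:
  fixes l :: nat
  assumes "l < 2^m" and "bit l t"
  shows "t < m"
  using assms by (metis bit_take_bit_iff take_bit_nat_eq_self)

lemma div_exp_eq_of_bool_bit:
  fixes a :: nat
  assumes "a < 2^Suc m"
  shows "a div 2^m = of_bool (bit a m)"
proof -
  have "a div 2^m < 2"
    using assms by (simp add: less_mult_imp_div_less)
  then show ?thesis
    by (auto simp: bit_iff_odd less_2_cases_iff)
qed

lemma bit_mod_exp_iff: "bit ((a::nat) mod 2^m) t \<longleftrightarrow> t < m \<and> bit a t"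
  by (simp flip: take_bit_eq_mod add: bit_take_bit_iff)

lemma G2_of_bool: "G2 (of_bool p) (of_bool q) = of_bool (q \<longrightarrow> p)"
  by (simp add: G2_def)

lemma Gmat_eq_of_bool_submask:
  assumes "a < 2^m" and "k < 2^m"
  shows "Gmat m a k = of_bool (\<forall>t<m. bit k t \<longrightarrow> bit a t)"
  using assms
proof (induction m arbitrary: a k)
  case 0
  then show ?case
    by simp
next
  case (Suc m)
  have "Gmat (Suc m) a k = of_bool (bit k m \<longrightarrow> bit a m) * Gmat m (a mod 2^m) (k mod 2^m)"
    using Suc.prems by (simp add: div_exp_eq_of_bool_bit G2_of_bool)
  also have "\<dots> = of_bool ((bit k m \<longrightarrow> bit a m) \<and> (\<forall>t<m. bit k t \<longrightarrow> bit a t))"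
    by (auto simp: Suc.IH bit_mod_exp_iff)
  also have "\<dots> = of_bool (\<forall>t<Suc m. bit k t \<longrightarrow> bit a t)"
    by (auto simp: less_Suc_eq)
  finally show ?case .
qed

lemma Gmat_Suc_lower_half:
  assumes "a < 2^Suc m" and "k < 2^m"
  shows "Gmat (Suc m) a k = Gmat m (a mod 2^m) k"
  using assms by (simp add: div_exp_eq_of_bool_bit G2_def)

lemma Gmat_Suc_upper_half:
  assumes "a < 2^Suc m" and "k < 2^m"
  shows "Gmat (Suc m) a (2^m + k) = of_bool (bit a m) * Gmat m (a mod 2^m) k"
proof -
  have "(2^m + k) div 2^m = 1" and "(2^m + k) mod 2^m = k"
    using assms(2) by (simp_all add: div_add_self1)
  then show ?thesis
    using assms(1) by (simp add: div_exp_eq_of_bool_bit G2_def)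
qed

lemma sum_lessThan_double:
  fixes f :: "nat \<Rightarrow> 'a::comm_monoid_add"
  shows "(\<Sum>k<2 * n. f k) = (\<Sum>k<n. f k) + (\<Sum>k<n. f (n + k))"
  by (simp add: mult_2 lessThan_atLeast0 sum.atLeastLessThan_concat[symmetric, of 0 n "n + n"]
      sum.shift_bounds_nat_ivl[of f 0 n n, simplified] add.commute)

lemma dot_Gmat_rows:
  assumes "a < 2^m" and "b < 2^m"
  shows "dot (2^m) (Gmat m a) (Gmat m b) = of_bool (\<forall>t<m. \<not> (bit a t \<and> bit b t))"
  using assms
proof (induction m arbitrary: a b)
  case 0
  then show ?case
    by (simp add: dot_def)
next
  case (Suc m)
  let ?lower = "dot (2^m) (Gmat m (a mod 2^m)) (Gmat m (b mod 2^m))"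
  have lower: "?lower = of_bool (\<forall>t<m. \<not> (bit a t \<and> bit b t))"
    by (auto simp: Suc.IH bit_mod_exp_iff)
  have "dot (2^Suc m) (Gmat (Suc m) a) (Gmat (Suc m) b)
      = (\<Sum>k<2^m. Gmat (Suc m) a k * Gmat (Suc m) b k)
        + (\<Sum>k<2^m. Gmat (Suc m) a (2^m + k) * Gmat (Suc m) b (2^m + k))"
    by (simp only: dot_def power_Suc sum_lessThan_double)
  also have "\<dots> = ?lower + of_bool (bit a m \<and> bit b m) * ?lower"
    unfolding dot_def sum_distrib_left using Suc.prems
    by (intro arg_cong2[where f = "(+)"] sum.cong)
      (simp_all del: Gmat.simps add: Gmat_Suc_lower_half Gmat_Suc_upper_half)
  also have "\<dots> = of_bool (\<forall>t<Suc m. \<not> (bit a t \<and> bit b t))"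
    by (auto simp: lower less_Suc_eq)
  finally show ?case .
qed

lemma dot_Gmat_complement_row_eq_0:
  assumes "i < l" and "l < 2^m"
  shows "dot (2^m) (Gmat m (2^m - 1 - i)) (Gmat m l) = 0"
proof -
  have i: "i < 2^m"
    using assms by simp
  have "\<exists>t<m. bit (2^m - 1 - i) t \<and> bit l t"
  proof (rule ccontr)
    assume "\<not> ?thesis"
    then have "bit l t \<Longrightarrow> bit i t" for t
      using bit_less_exp_imp_less[OF assms(2)] bit_exp_minus_1_minus_iff[OF i] by blast
    then have "l \<le> i"
      by (rule bits_subset_imp_le)
    then show False
      using assms(1) by simp
  qed
  then show ?thesis
    using assms i by (simp add: dot_Gmat_rows)
qed

lemma dot_PG_row:
  "dot N a (PG_row m P j) = (\<Sum>l<2^m. P j l * dot N a (Gmat m l))"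
proof -
  have "dot N a (PG_row m P j) = (\<Sum>k<N. \<Sum>l<2^m. P j l * (a k * Gmat m l k))"
    unfolding dot_def PG_row_def sum_distrib_left by (simp add: ac_simps)
  also have "\<dots> = (\<Sum>l<2^m. P j l * dot N a (Gmat m l))"
    unfolding dot_def sum_distrib_left by (rule sum.swap)
  finally show ?thesis .
qed

lemma ev_mono_eq_of_bool_disjoint:
  assumes "S \<subseteq> {..<m}" and "k < 2^m"
  shows "ev_mono m S k = of_bool (\<forall>t\<in>S. \<not> bit k t)"
  using assms bit_exp_minus_1_minus_iff[OF assms(2)]
  by (auto simp: ev_mono_def digit_eq_bit)

lemma ev_mono_eq_Gmat_row:
  assumes "a < 2^m" and "k < 2^m"
  shows "ev_mono m {t. t < m \<and> \<not> bit a t} k = Gmat m a k"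
proof -
  have "ev_mono m {t. t < m \<and> \<not> bit a t} k = of_bool (\<forall>t<m. \<not> bit a t \<longrightarrow> \<not> bit k t)"
    using assms(2) by (subst ev_mono_eq_of_bool_disjoint) auto
  also have "\<dots> = Gmat m a k"
    using assms by (simp add: Gmat_eq_of_bool_submask) blast
  finally show ?thesis .
qed

lemma ev_mono_eq_imp_eq:
  assumes "S \<subseteq> {..<m}" and "T \<subseteq> {..<m}"
    and "\<forall>k<2^m. ev_mono m S k = ev_mono m T k"
  shows "S = T"
proof -
  have "t \<in> S \<longleftrightarrow> t \<in> T" if "t < m" for t
    using assms(3)[rule_format, of "2^t"] that assms(1,2)
    by (auto simp: ev_mono_eq_of_bool_disjoint bit_exp_iff of_bool_eq_iff)
  then show ?thesis
    using assms(1,2) by auto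
qed

theorem lemma4:
  fixes m :: nat and P :: "nat \<Rightarrow> nat \<Rightarrow> bit" and A :: "nat set"
    and S :: "nat set" and i :: nat
  assumes "m \<ge> 1"
    and "upper_unitriangular (2^m) P"
    and "A \<subseteq> {..<2^m}"
    and "S \<subseteq> {..<m}"
    and "i < 2^m"
    and "\<forall>k<2^m. ev_mono m S k = Gmat m i k"
  shows "\<forall>j. i < j \<and> j < 2^m \<longrightarrow>
           dot (2^m) (ev_mono m (mono_compl m S)) (PG_row m P j) = 0"
proof (intro allI impI)
  fix j
  assume j: "i < j \<and> j < 2^m"
  define i' where "i' = 2^m - 1 - i"
  have "S = {t. t < m \<and> \<not> bit i t}"
    using assms(4-6) by (intro ev_mono_eq_imp_eq) (auto simp: ev_mono_eq_Gmat_row)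
  then have "mono_compl m S = {t. t < m \<and> \<not> bit i' t}"
    using bit_exp_minus_1_minus_iff[OF assms(5)] by (auto simp: mono_compl_def i'_def)
  then have "ev_mono m (mono_compl m S) k = Gmat m i' k" if "k < 2^m" for k
    using that by (simp add: ev_mono_eq_Gmat_row i'_def)
  then have "dot (2^m) (ev_mono m (mono_compl m S)) (PG_row m P j)
      = (\<Sum>l<2^m. P j l * dot (2^m) (Gmat m i') (Gmat m l))"
    unfolding dot_PG_row by (intro sum.cong) (simp_all add: dot_def)
  also have "\<dots> = 0"
  proof (intro sum.neutral ballI)
    fix l :: nat
    assume "l \<in> {..<2^m}"
    then show "P j l * dot (2^m) (Gmat m i') (Gmat m l) = 0"
      using assms(2) j dot_Gmat_complement_row_eq_0[of i l m]
      by (cases "l < j") (auto simp: upper_unitriangular_def i'_def)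
  qed
  finally show "dot (2^m) (ev_mono m (mono_compl m S)) (PG_row m P j) = 0" .
qed

end
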